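(* There is a constant $C_d$ depending only on $d$ such that the following holds. Let $B\subset\mathbb{R}^d$ be an open ball of radius $r$ and $\tilde B$ the ball with the same center and radius $2r$. Let $M\ge\frac1{4r^2}$ and $\delta>0$. Let $F\in C^2(\tilde B)$ satisfy $\sup_{|\beta|=2,\,x\in\tilde B}|\partial_\beta F(x)|\le M$. Let $S$ be the set of $x\in B$ with $$\langle\!\langle F(x)\rangle\!\rangle<\delta\qquad\text{and}\qquad\|\nabla F(x)\|\ge\sqrt{dM}.$$ Then $|S|\le C_d\,\delta\,|B|$.
   Context: $\langle\!\langle t\rangle\!\rangle$ is the distance from $t\in\mathbb{R}$ to the nearest integer; $\nabla F(x)$ is the gradient and $\|\cdot\|$ the sup-norm on $\mathbb{R}^d$; $|\cdot|$ is Lebesgue measure; $\partial_\beta$ are partial derivatives with multiindex $\beta$ of order $|\beta|$. *)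

theory Defs
  imports "HOL-Analysis.Analysis"
begin

definition dist_int :: "real \<Rightarrow> real" where
  "dist_int t = \<bar>t - of_int (round t)\<bar>"

definition partial :: "'n::finite \<Rightarrow> (real^'n \<Rightarrow> real) \<Rightarrow> real^'n \<Rightarrow> real" where
  "partial i f x = deriv (\<lambda>t. f (x + t *\<^sub>R axis i 1)) 0"

definition has_partial_on :: "'n::finite \<Rightarrow> (real^'n \<Rightarrow> real) \<Rightarrow> (real^'n) set \<Rightarrow> bool" where
  "has_partial_on i f U \<longleftrightarrow> (\<forall>x\<in>U. (\<lambda>t. f (x + t *\<^sub>R axis i 1)) differentiable (at 0))"

definition C2_on :: "(real^'n::finite \<Rightarrow> real) \<Rightarrow> (real^'n) set \<Rightarrow> bool" where
  "C2_on f U \<longleftrightarrow> continuous_on U f \<and>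
     (\<forall>i. has_partial_on i f U \<and> continuous_on U (partial i f)) \<and>
     (\<forall>i j. has_partial_on j (partial i f) U \<and> continuous_on U (partial j (partial i f)))"

definition grad :: "(real^'n::finite \<Rightarrow> real) \<Rightarrow> real^'n \<Rightarrow> real^'n" where
  "grad f x = (\<chi> i. partial i f x)"

definition supnorm :: "real^'n::finite \<Rightarrow> real" where
  "supnorm v = Max (range (\<lambda>i. \<bar>v $ i\<bar>))"

end

theory Submission
  imports Defs
begin

(*
  Where the sup-norm of the gradient is at least sqrt (d M), some partial derivative satisfies
  |partial i F| >= sqrt (d M), so it suffices to bound each of the d sets A_i where this happens.
  Cut A_i by segments of length h = 1 / (2 d sqrt M) in direction i. As the second derivatives
  are bounded by M, along a segment meeting A_i at x the slope of F stays within a factor 2 of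
  G = |partial i F x| >= sqrt M. A function of one variable with slope comparable to G on an
  interval of length h comes delta-close to an integer only on a set of length
  O(delta (G h + 1) / G) = O(d delta h). Integrating over all parallel segments (Tonelli) gives
  |A_i| = O(d delta) |2B|, and |2B| = 2^d |B|.
*)

lemma has_real_derivative_partial_along_axis:
  assumes "has_partial_on i f U" "y + t *\<^sub>R axis i 1 \<in> U"
  shows "((\<lambda>s. f (y + s *\<^sub>R axis i 1)) has_real_derivative partial i f (y + t *\<^sub>R axis i 1)) (at t)"
proof -
  let ?z = "y + t *\<^sub>R axis i 1"
  have "(\<lambda>s. f (?z + s *\<^sub>R axis i 1)) differentiable (at 0)"
    using assms unfolding has_partial_on_def by blast
  then have "((\<lambda>s. f (?z + s *\<^sub>R axis i 1)) has_real_derivative partial i f ?z) (at 0)"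
    unfolding partial_def using DERIV_deriv_iff_real_differentiable by blast
  moreover have "(\<lambda>s. f (?z + s *\<^sub>R axis i 1)) = (\<lambda>s. f (y + (s + t) *\<^sub>R axis i 1))"
    by (simp add: algebra_simps scaleR_add_left)
  ultimately show ?thesis
    using DERIV_shift[of "\<lambda>s. f (y + s *\<^sub>R axis i 1)" _ 0 t] by simp
qed

lemma real_mean_value_theorem_interval:
  fixes f f' :: "real \<Rightarrow> real"
  assumes der: "\<And>t. t \<in> {a..b} \<Longrightarrow> (f has_real_derivative f' t) (at t)"
    and "s \<in> {a..b}" "t \<in> {a..b}"
  shows "\<exists>\<xi>\<in>{a..b}. f t - f s = (t - s) * f' \<xi>"
proof -
  have mvt: "\<exists>\<xi>\<in>{a..b}. f v - f u = (v - u) * f' \<xi>" if "u < v" "u \<in> {a..b}" "v \<in> {a..b}" for u v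
  proof -
    have "(f has_real_derivative f' x) (at x)" if "u \<le> x" "x \<le> v" for x
      using \<open>u \<in> {a..b}\<close> \<open>v \<in> {a..b}\<close> that by (intro der) auto
    then obtain \<xi> where "u < \<xi>" "\<xi> < v" "f v - f u = (v - u) * f' \<xi>"
      using MVT2[OF \<open>u < v\<close>] by blast
    then show ?thesis using that by (intro bexI[of _ \<xi>]) auto
  qed
  consider "s < t" | "t < s" | "s = t" by linarith
  then show ?thesis
  proof cases
    case 1 then show ?thesis using mvt assms(2,3) by blast
  next
    case 2
    then obtain \<xi> where "\<xi> \<in> {a..b}" "f s - f t = (s - t) * f' \<xi>"
      using mvt[of t s] assms(2,3) by blast
    then show ?thesis by (intro bexI[of _ \<xi>]) (auto simp: algebra_simps)
  next
    case 3 then show ?thesis using assms(3) by auto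
  qed
qed

lemma dist_le_card_mul_coordinatewise:
  fixes x z :: "real^'n::finite"
  assumes "\<And>j. \<bar>z$j - x$j\<bar> \<le> h"
  shows "dist x z \<le> real CARD('n) * h"
proof -
  have "dist x z \<le> (\<Sum>j\<in>UNIV. \<bar>(z - x)$j\<bar>)"
    using norm_le_l1_cart[of "z - x"] by (simp add: dist_norm norm_minus_commute)
  also have "\<dots> \<le> real CARD('n) * h"
    using sum_bounded_above[of UNIV "\<lambda>j. \<bar>(z - x)$j\<bar>" h] assms by simp
  finally show ?thesis .
qed

text \<open>Move from x0 to z one coordinate at a time; each move is a one-variable mean value step.\<close>
lemma abs_diff_le_partial_bound_on_cube:
  fixes g :: "real^'n::finite \<Rightarrow> real"
  assumes hp: "\<And>j. has_partial_on j g U" and bd: "\<And>j z. z \<in> U \<Longrightarrow> \<bar>partial j g z\<bar> \<le> M"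
    and cube: "{z. \<forall>j. \<bar>z$j - x0$j\<bar> \<le> h} \<subseteq> U" and z: "\<And>j. \<bar>z$j - x0$j\<bar> \<le> h"
  shows "\<bar>g z - g x0\<bar> \<le> real CARD('n) * M * h"
proof -
  define w where "w J = (\<chi> k. if k \<in> J then z$k else x0$k)" for J
  have "\<bar>g (w J) - g x0\<bar> \<le> real (card J) * M * h" if "finite J" for J
    using that
  proof (induction J rule: finite_induct)
    case empty
    have "w {} = x0" by (simp add: w_def vec_eq_iff)
    then show ?case by simp
  next
    case (insert j J)
    let ?L = "z$j - x0$j"
    have step: "w (insert j J) = w J + ?L *\<^sub>R axis j 1"
      using insert.hyps by (auto simp: w_def vec_eq_iff axis_def)
    have on_segment: "w J + s *\<^sub>R axis j 1 \<in> U" if "s \<in> {min 0 ?L..max 0 ?L}" for s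
    proof -
      have "\<bar>(w J + s *\<^sub>R axis j 1)$k - x0$k\<bar> \<le> h" for k
        using z[of k] z[of j] that insert.hyps by (auto simp: w_def axis_def)
      then show ?thesis using cube by blast
    qed
    have der: "((\<lambda>s. g (w J + s *\<^sub>R axis j 1)) has_real_derivative partial j g (w J + s *\<^sub>R axis j 1)) (at s)"
      if "s \<in> {min 0 ?L..max 0 ?L}" for s
      using has_real_derivative_partial_along_axis[OF hp on_segment[OF that]] .
    have "0 \<in> {min 0 ?L..max 0 ?L}" "?L \<in> {min 0 ?L..max 0 ?L}" by auto
    then obtain \<xi> where \<xi>: "\<xi> \<in> {min 0 ?L..max 0 ?L}"
      "g (w J + ?L *\<^sub>R axis j 1) - g (w J + 0 *\<^sub>R axis j 1) = (?L - 0) * partial j g (w J + \<xi> *\<^sub>R axis j 1)"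
      using real_mean_value_theorem_interval[OF der] by blast
    have "\<bar>g (w (insert j J)) - g (w J)\<bar> = \<bar>?L\<bar> * \<bar>partial j g (w J + \<xi> *\<^sub>R axis j 1)\<bar>"
      using \<xi>(2) step by (simp add: abs_mult)
    also have "\<dots> \<le> h * M"
      using z[of j] bd[OF on_segment[OF \<xi>(1)]] by (intro mult_mono) auto
    finally have "\<bar>g (w (insert j J)) - g (w J)\<bar> \<le> M * h" by (simp add: mult.commute)
    then show ?case using insert by (simp add: algebra_simps)
  qed
  moreover have "w UNIV = z" by (simp add: w_def vec_eq_iff)
  ultimately show ?thesis using finite_UNIV by fastforce
qed

lemma abs_diff_bounds_from_derivative:
  fixes f f' :: "real \<Rightarrow> real"
  assumes der: "\<And>t. t \<in> {a..b} \<Longrightarrow> (f has_real_derivative f' t) (at t)"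
    and bnd: "\<And>t. t \<in> {a..b} \<Longrightarrow> m \<le> \<bar>f' t\<bar> \<and> \<bar>f' t\<bar> \<le> K"
    and s: "s \<in> {a..b}" and t: "t \<in> {a..b}"
  shows "m * \<bar>t - s\<bar> \<le> \<bar>f t - f s\<bar>" and "\<bar>f t - f s\<bar> \<le> K * \<bar>t - s\<bar>"
proof -
  obtain \<xi> where \<xi>: "\<xi> \<in> {a..b}" "f t - f s = (t - s) * f' \<xi>"
    using real_mean_value_theorem_interval[OF der s t] by blast
  then have "\<bar>f t - f s\<bar> = \<bar>f' \<xi>\<bar> * \<bar>t - s\<bar>" by (simp add: abs_mult)
  then show "m * \<bar>t - s\<bar> \<le> \<bar>f t - f s\<bar>" "\<bar>f t - f s\<bar> \<le> K * \<bar>t - s\<bar>"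
    using bnd[OF \<xi>(1)] by (auto intro: mult_right_mono)
qed

text \<open>Each integer k contributes at most an interval of length 4\<delta>/a, centred at some
  point where f is \<delta>-close to k; only about 2R integers are within reach of f. The bound is
  stated for subsets T because the set on the right need not be measurable.\<close>
lemma emeasure_near_integers_le:
  fixes f :: "real \<Rightarrow> real"
  assumes a: "a > 0" and \<delta>: "\<delta> > 0" and R: "R \<ge> 0"
    and expand: "\<And>s t. s \<in> D \<Longrightarrow> t \<in> D \<Longrightarrow> a * \<bar>t - s\<bar> \<le> \<bar>f t - f s\<bar>"
    and range: "\<And>t. t \<in> D \<Longrightarrow> \<bar>f t - y0\<bar> \<le> R"
    and T: "T \<subseteq> {t \<in> D. dist_int (f t) < \<delta>}"
  shows "emeasure lborel T \<le> ennreal ((2*R + 3) * (4*\<delta>/a))"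
proof -
  define K where "K = {\<lceil>y0 - R - 1\<rceil>..\<lfloor>y0 + R + 1\<rfloor>}"
  have card_K: "real (card K) \<le> 2*R + 3"
  proof -
    have "real_of_int (\<lfloor>y0 + R + 1\<rfloor> - \<lceil>y0 - R - 1\<rceil> + 1) \<le> 2*R + 3"
      using of_int_floor_le[of "y0 + R + 1"] le_of_int_ceiling[of "y0 - R - 1"] by linarith
    then show ?thesis using R by (simp add: K_def)
  qed
  define \<rho> where "\<rho> = 2*\<delta>/a"
  define hit where "hit k \<longleftrightarrow> (\<exists>t\<in>D. \<bar>f t - real_of_int k\<bar> < \<delta>)" for k :: int
  define c where "c k = (SOME t. t \<in> D \<and> \<bar>f t - real_of_int k\<bar> < \<delta>)" for k :: int
  define I where "I k = (if hit k then {c k - \<rho>..c k + \<rho>} else {})" for k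
  have c: "c k \<in> D" "\<bar>f (c k) - real_of_int k\<bar> < \<delta>" if "hit k" for k
    using someI_ex[OF that[unfolded hit_def Bex_def]] by (auto simp: c_def)
  have cover: "T \<subseteq> (\<Union>k\<in>K. I k)"
  proof
    fix t assume "t \<in> T"
    then have t: "t \<in> D" "dist_int (f t) < \<delta>" using T by auto
    define k where "k = round (f t)"
    have near: "\<bar>f t - real_of_int k\<bar> < \<delta>" using t(2) by (simp add: dist_int_def k_def)
    have "\<bar>f t - real_of_int k\<bar> \<le> 1/2"
      unfolding k_def using of_int_round_abs_le[of "f t"] by (simp add: abs_minus_commute)
    then have "y0 - R - 1 \<le> real_of_int k" "real_of_int k \<le> y0 + R + 1"
      using range[OF t(1)] by arith+
    then have "k \<in> K" unfolding K_def atLeastAtMost_iff by (metis ceiling_le le_floor_iff)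
    moreover have hit: "hit k" using t(1) near by (auto simp: hit_def)
    moreover have "a * \<bar>t - c k\<bar> < a * \<rho>"
      using expand[OF c(1)[OF hit] t(1)] c(2)[OF hit] near a by (simp add: \<rho>_def)
    then have "\<bar>t - c k\<bar> < \<rho>" using a by simp
    ultimately show "t \<in> (\<Union>k\<in>K. I k)" unfolding I_def by (intro UN_I[of k]) auto
  qed
  have "emeasure lborel T \<le> emeasure lborel (\<Union>k\<in>K. I k)"
    by (rule emeasure_mono[OF cover]) (auto simp: I_def)
  also have "\<dots> \<le> (\<Sum>k\<in>K. emeasure lborel (I k))"
    by (rule emeasure_subadditive_finite) (auto simp: K_def I_def)
  also have "\<dots> \<le> (\<Sum>k\<in>K. ennreal (4*\<delta>/a))"
    using a \<delta> by (intro sum_mono) (simp add: I_def \<rho>_def)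
  also have "\<dots> = ennreal (real (card K) * (4*\<delta>/a))"
    using a \<delta> by (subst ennreal_mult) (auto simp: ennreal_of_nat_eq_real_of_nat)
  also have "\<dots> \<le> ennreal ((2*R + 3) * (4*\<delta>/a))"
    using card_K a \<delta> by (intro ennreal_leI mult_right_mono) auto
  finally show ?thesis .
qed

lemma emeasure_near_integers_on_segment:
  fixes f f' :: "real \<Rightarrow> real"
  assumes h: "h \<ge> 0" and \<delta>: "\<delta> > 0" and G: "G > 0"
    and der: "\<And>t. t \<in> {0..h} \<Longrightarrow> (f has_real_derivative f' t) (at t)"
    and slope: "\<And>t. t \<in> {0..h} \<Longrightarrow> G/2 \<le> \<bar>f' t\<bar> \<and> \<bar>f' t\<bar> \<le> 3*G/2"
    and T: "T \<subseteq> {t \<in> {0..h}. dist_int (f t) < \<delta>}"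
  shows "emeasure lborel T \<le> ennreal (24*\<delta>*h + 24*\<delta>/G)"
proof -
  note bounds = abs_diff_bounds_from_derivative[OF der slope]
  have "\<bar>f t - f 0\<bar> \<le> 3*G/2 * h" if "t \<in> {0..h}" for t
  proof -
    have "\<bar>f t - f 0\<bar> \<le> 3*G/2 * \<bar>t - 0\<bar>" by (rule bounds(2)) (use that h in auto)
    also have "\<dots> \<le> 3*G/2 * h" using that G by (intro mult_left_mono) auto
    finally show ?thesis .
  qed
  then have "emeasure lborel T \<le> ennreal ((2*(3*G/2*h) + 3) * (4*\<delta>/(G/2)))"
    using G \<delta> h by (intro emeasure_near_integers_le[OF _ \<delta> _ bounds(1) _ T]) auto
  also have "(2*(3*G/2*h) + 3) * (4*\<delta>/(G/2)) = 24*\<delta>*h + 24*\<delta>/G"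
    using G by (simp add: field_simps)
  finally show ?thesis .
qed

text \<open>Averaging the measure of A over all translates of a segment: Tonelli plus translation
  invariance of Lebesgue measure.\<close>
lemma emeasure_le_from_segments:
  fixes A U :: "'a::euclidean_space set" and e :: 'a
  assumes [measurable]: "A \<in> sets borel" "U \<in> sets borel" and h: "h > 0" and c: "c \<ge> 0"
    and seg: "\<And>y. emeasure lborel {t \<in> {0..h}. y + t *\<^sub>R e \<in> A} \<le> ennreal (c * h) * indicator U y"
  shows "emeasure lborel A \<le> ennreal c * emeasure lborel U"
proof -
  define \<phi> where "\<phi> y t = (indicator A (y + t *\<^sub>R e) * indicator {0..h} t :: ennreal)" for y t
  have [measurable]: "case_prod \<phi> \<in> borel_measurable (lborel \<Otimes>\<^sub>M lborel)"
    unfolding \<phi>_def by measurable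
  have inner: "(\<integral>\<^sup>+t. \<phi> y t \<partial>lborel) = emeasure lborel {t \<in> {0..h}. y + t *\<^sub>R e \<in> A}" for y
  proof -
    have "\<phi> y = indicator {t \<in> {0..h}. y + t *\<^sub>R e \<in> A}"
      by (auto simp: \<phi>_def indicator_def)
    moreover have "{t \<in> {0..h}. y + t *\<^sub>R e \<in> A} \<in> sets lborel" by measurable
    ultimately show ?thesis by simp
  qed
  have translate: "(\<integral>\<^sup>+y. indicator A (y + t *\<^sub>R e) \<partial>lborel) = emeasure lborel A" for t
  proof -
    have "(\<integral>\<^sup>+y. indicator A (t *\<^sub>R e + y) \<partial>lborel)
        = (\<integral>\<^sup>+y. indicator A y \<partial>(distr lborel borel ((+) (t *\<^sub>R e))))"
      by (subst nn_integral_distr) auto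
    then show ?thesis by (simp add: lborel_distr_plus add.commute)
  qed
  have "pair_sigma_finite (lborel :: 'a measure) (lborel :: real measure)"
    by (intro pair_sigma_finite.intro sigma_finite_lborel)
  note Fubini = pair_sigma_finite.Fubini'[OF this]
  have "emeasure lborel A * ennreal h = (\<integral>\<^sup>+t. emeasure lborel A * indicator {0..h} t \<partial>lborel)"
    using h by (subst nn_integral_cmult_indicator) auto
  also have "\<dots> = (\<integral>\<^sup>+t. (\<integral>\<^sup>+y. \<phi> y t \<partial>lborel) \<partial>lborel)"
    unfolding \<phi>_def by (intro nn_integral_cong) (simp add: nn_integral_multc translate)
  also have "\<dots> = (\<integral>\<^sup>+y. (\<integral>\<^sup>+t. \<phi> y t \<partial>lborel) \<partial>lborel)"
    by (rule Fubini) measurable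
  also have "\<dots> \<le> (\<integral>\<^sup>+y. ennreal (c * h) * indicator U y \<partial>lborel)"
    by (intro nn_integral_mono) (unfold inner, rule seg)
  also have "\<dots> = ennreal (c * h) * emeasure lborel U"
    by (rule nn_integral_cmult_indicator) measurable
  also have "\<dots> = ennreal c * emeasure lborel U * ennreal h"
    using c h by (simp add: ennreal_mult' mult_ac)
  finally show ?thesis
    using h by (simp add: ennreal_mult_le_mult_iff mult.commute[of _ "ennreal h"])
qed

lemma borel_measurable_dist_int [measurable]: "dist_int \<in> borel_measurable borel"
  unfolding dist_int_def round_def by measurable

lemma sets_borel_dist_int_less_abs_ge:
  fixes f g :: "'a::topological_space \<Rightarrow> real"
  assumes [measurable]: "U \<in> sets borel" "S \<in> sets borel" and "S \<subseteq> U"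
    and "continuous_on U f" "continuous_on U g"
  shows "{x \<in> S. dist_int (f x) < \<delta> \<and> k \<le> \<bar>g x\<bar>} \<in> sets borel"
proof -
  define f\<^sub>U where "f\<^sub>U x = indicator U x *\<^sub>R f x" for x
  define g\<^sub>U where "g\<^sub>U x = indicator U x *\<^sub>R g x" for x
  have [measurable]: "f\<^sub>U \<in> borel_measurable borel"
    unfolding f\<^sub>U_def by (rule borel_measurable_continuous_on_indicator) (use assms in auto)
  have [measurable]: "g\<^sub>U \<in> borel_measurable borel"
    unfolding g\<^sub>U_def by (rule borel_measurable_continuous_on_indicator) (use assms in auto)
  have "{x \<in> S. dist_int (f x) < \<delta> \<and> k \<le> \<bar>g x\<bar>} = {x \<in> S. dist_int (f\<^sub>U x) < \<delta> \<and> k \<le> \<bar>g\<^sub>U x\<bar>}"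
    using \<open>S \<subseteq> U\<close> by (auto simp: f\<^sub>U_def g\<^sub>U_def)
  then show ?thesis by simp
qed

lemma le_supnorm_iff: "t \<le> supnorm v \<longleftrightarrow> (\<exists>i. t \<le> \<bar>v $ i\<bar>)"
  unfolding supnorm_def by (subst Max_ge_iff) auto

lemma measure_lborel_ball_scale:
  fixes c :: "'a::euclidean_space"
  assumes "k \<ge> 0" "r \<ge> 0"
  shows "measure lborel (ball c (k * r)) = k ^ DIM('a) * measure lborel (ball c r)"
  using content_ball_conv_unit_ball[of "k * r" c] content_ball_conv_unit_ball[of r c] assms
  by (simp add: power_mult_distrib)

locale bounded_second_partials =
  fixes c :: "real^'n::finite" and r M :: real and F :: "real^'n \<Rightarrow> real"
  assumes r_pos: "r > 0" and M_ge: "M \<ge> 1 / (4 * r^2)"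
    and C2: "C2_on F (ball c (2 * r))"
    and second_partials_le: "\<And>i j x. x \<in> ball c (2 * r) \<Longrightarrow> \<bar>partial j (partial i F) x\<bar> \<le> M"
begin

definition steep_set :: "real \<Rightarrow> 'n \<Rightarrow> (real^'n) set" where
  "steep_set \<delta> i = {x \<in> ball c r. dist_int (F x) < \<delta> \<and> sqrt (real CARD('n) * M) \<le> \<bar>partial i F x\<bar>}"

definition side :: real where
  "side = 1 / (2 * real CARD('n) * sqrt M)"

lemma M_pos: "M > 0"
  using r_pos by (intro order.strict_trans2[OF _ M_ge]) simp

lemma side_pos: "side > 0"
  using M_pos by (simp add: side_def)

lemma card_mul_side_le: "real CARD('n) * side \<le> r"
proof -
  have "1 / (2 * r) \<le> sqrt M"
    using M_ge by (intro real_le_rsqrt) (simp add: power_divide power_mult_distrib)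
  then show ?thesis using r_pos M_pos by (simp add: side_def field_simps)
qed

lemma sets_borel_steep_set: "steep_set \<delta> i \<in> sets borel"
proof -
  have "ball c r \<subseteq> ball c (2 * r)" using r_pos by (intro subset_ball) simp
  then show ?thesis unfolding steep_set_def
    using C2 by (intro sets_borel_dist_int_less_abs_ge) (auto simp: C2_on_def)
qed

lemma partial_oscillation_on_cube:
  assumes x: "x \<in> ball c r" and z: "\<And>j. \<bar>z$j - x$j\<bar> \<le> side"
  shows "z \<in> ball c (2 * r)" and "\<bar>partial i F z - partial i F x\<bar> \<le> sqrt M / 2"
proof -
  have cube: "{z. \<forall>j. \<bar>z$j - x$j\<bar> \<le> side} \<subseteq> ball c (2 * r)"
  proof
    fix z assume "z \<in> {z. \<forall>j. \<bar>z$j - x$j\<bar> \<le> side}"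
    then have "dist x z \<le> real CARD('n) * side" by (intro dist_le_card_mul_coordinatewise) auto
    then show "z \<in> ball c (2 * r)" using x card_mul_side_le dist_triangle[of c z x] by simp
  qed
  then show "z \<in> ball c (2 * r)" using z by blast
  have "\<bar>partial i F z - partial i F x\<bar> \<le> real CARD('n) * M * side"
    using C2 z second_partials_le
    by (intro abs_diff_le_partial_bound_on_cube[OF _ _ cube]) (auto simp: C2_on_def)
  also have "real CARD('n) * M * side = sqrt M / 2"
    using M_pos by (simp add: side_def field_simps real_sqrt_mult_self flip: real_sqrt_mult)
  finally show "\<bar>partial i F z - partial i F x\<bar> \<le> sqrt M / 2" .
qed

text \<open>On a segment meeting the steep set at x, the slope of F stays between G/2 and 3G/2,
  where G = |partial i F x| \<ge> \<surd>M, and 1/G \<le> 2 d side.\<close>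
lemma emeasure_steep_segment_le:
  assumes \<delta>: "\<delta> > 0"
  shows "emeasure lborel {t \<in> {0..side}. y + t *\<^sub>R axis i 1 \<in> steep_set \<delta> i}
           \<le> ennreal ((24 + 48 * real CARD('n)) * \<delta> * side) * indicator (ball c (2 * r)) y"
    (is "emeasure lborel ?T \<le> ennreal (?K * side) * _")
proof (cases "?T = {}")
  case True
  then show ?thesis by (metis emeasure_empty zero_le)
next
  case False
  then obtain t\<^sub>0 where t\<^sub>0: "t\<^sub>0 \<in> {0..side}" "y + t\<^sub>0 *\<^sub>R axis i 1 \<in> steep_set \<delta> i" by blast
  define x where "x = y + t\<^sub>0 *\<^sub>R axis i 1"
  define G where "G = \<bar>partial i F x\<bar>"
  have x: "x \<in> ball c r" and G_ge: "sqrt (real CARD('n) * M) \<le> G"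
    using t\<^sub>0(2) by (auto simp: x_def G_def steep_set_def)
  have "sqrt M \<le> sqrt (real CARD('n) * M)" using M_pos by simp
  then have G: "sqrt M \<le> G" "G > 0" using G_ge real_sqrt_gt_zero[OF M_pos] by linarith+
  have osc: "y + t *\<^sub>R axis i 1 \<in> ball c (2 * r)"
      "\<bar>partial i F (y + t *\<^sub>R axis i 1) - partial i F x\<bar> \<le> sqrt M / 2" if "t \<in> {0..side}" for t
    using that t\<^sub>0(1) side_pos
    by (intro partial_oscillation_on_cube[OF x]; auto simp: x_def axis_def)+
  have slope: "G/2 \<le> \<bar>partial i F (y + t *\<^sub>R axis i 1)\<bar> \<and> \<bar>partial i F (y + t *\<^sub>R axis i 1)\<bar> \<le> 3*G/2"
    if "t \<in> {0..side}" for t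
    using osc(2)[OF that] G unfolding G_def by linarith
  have der: "((\<lambda>s. F (y + s *\<^sub>R axis i 1)) has_real_derivative partial i F (y + t *\<^sub>R axis i 1)) (at t)"
    if "t \<in> {0..side}" for t
    using C2 osc(1)[OF that] by (intro has_real_derivative_partial_along_axis) (auto simp: C2_on_def)
  have "emeasure lborel ?T \<le> ennreal (24*\<delta>* side + 24*\<delta>/G)"
    using side_pos \<delta> G
    by (intro emeasure_near_integers_on_segment[OF _ _ _ der slope]) (auto simp: steep_set_def)
  also have "\<dots> \<le> ennreal (?K * side)"
  proof (rule ennreal_leI)
    have "1/G \<le> 2 * real CARD('n) * side" using G M_pos by (simp add: side_def field_simps)
    then have "24*\<delta>*(1/G) \<le> 24*\<delta>*(2 * real CARD('n) * side)" using \<delta> by (intro mult_left_mono) auto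
    then show "24*\<delta>* side + 24*\<delta>/G \<le> ?K * side" by (simp add: algebra_simps)
  qed
  finally show ?thesis using osc(1)[of 0] side_pos by simp
qed

lemma measure_steep_set_le:
  assumes \<delta>: "\<delta> > 0"
  shows "measure lborel (steep_set \<delta> i) \<le> (24 + 48 * real CARD('n)) * \<delta> * measure lborel (ball c (2 * r))"
    (is "_ \<le> ?K * _")
proof -
  have "emeasure lborel (steep_set \<delta> i) \<le> ennreal ?K * emeasure lborel (ball c (2 * r))"
    using \<delta> by (intro emeasure_le_from_segments[OF sets_borel_steep_set _ side_pos _
        emeasure_steep_segment_le]) auto
  also have "\<dots> = ennreal (?K * measure lborel (ball c (2 * r)))"
    using \<delta> emeasure_lborel_ball_finite[of c "2 * r"]
    by (simp add: emeasure_eq_ennreal_measure ennreal_mult')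
  finally show ?thesis
    unfolding measure_def using \<delta> by (intro enn2real_leI) auto
qed

end

theorem lemma2p2:
  "\<exists>C::real. C > 0 \<and>
    (\<forall>(c::real^'n::finite) (r::real) (M::real) (\<delta>::real) (F::real^'n \<Rightarrow> real).
       r > 0 \<longrightarrow> M \<ge> 1 / (4 * r^2) \<longrightarrow> \<delta> > 0 \<longrightarrow>
       C2_on F (ball c (2 * r)) \<longrightarrow>
       (\<forall>i j. \<forall>x\<in>ball c (2 * r). \<bar>partial j (partial i F) x\<bar> \<le> M) \<longrightarrow>
       (let S = {x \<in> ball c r. dist_int (F x) < \<delta> \<and>
                   supnorm (grad F x) \<ge> sqrt (real CARD('n) * M)}
        in S \<in> sets lebesgue \<and>
           measure lebesgue S \<le> C * \<delta> * measure lebesgue (ball c r)))"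
proof (intro exI[of _ "real CARD('n) * (24 + 48 * real CARD('n)) * 2 ^ CARD('n)"] conjI allI impI,
       unfold Let_def)
  let ?d = "real CARD('n)"
  show "?d * (24 + 48 * ?d) * 2 ^ CARD('n) > 0" by simp
  fix c :: "real^'n" and r M \<delta> :: real and F :: "real^'n \<Rightarrow> real"
  assume r: "r > 0" and M: "M \<ge> 1 / (4 * r^2)" and \<delta>: "\<delta> > 0" and C2: "C2_on F (ball c (2 * r))"
    and bd: "\<forall>i j. \<forall>x\<in>ball c (2 * r). \<bar>partial j (partial i F) x\<bar> \<le> M"
  interpret bounded_second_partials c r M F
    using r M C2 bd by unfold_locales auto
  let ?S = "{x \<in> ball c r. dist_int (F x) < \<delta> \<and> sqrt (?d * M) \<le> supnorm (grad F x)}"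
  have S: "?S = (\<Union>i. steep_set \<delta> i)"
    by (auto simp: steep_set_def le_supnorm_iff grad_def)
  have "measure lborel (\<Union>i. steep_set \<delta> i) \<le> (\<Sum>i\<in>UNIV. measure lborel (steep_set \<delta> i))"
    using sets_borel_steep_set by (intro measure_UNION_le) auto
  also have "\<dots> \<le> (\<Sum>i\<in>(UNIV::'n set). (24 + 48 * ?d) * \<delta> * measure lborel (ball c (2 * r)))"
    using \<delta> by (intro sum_mono measure_steep_set_le)
  also have "\<dots> = ?d * (24 + 48 * ?d) * 2 ^ CARD('n) * \<delta> * measure lborel (ball c r)"
    using measure_lborel_ball_scale[of 2 r c] r by simp
  finally show "?S \<in> sets lebesgue \<and>
      measure lebesgue ?S \<le> ?d * (24 + 48 * ?d) * 2 ^ CARD('n) * \<delta> * measure lebesgue (ball c r)"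
    unfolding S using sets_borel_steep_set by auto
qed

end
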